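(* Let $\mathcal{S}\subset\mathbb{R}^3$ be a smooth, closed, orientable surface and let $\mathcal{R}:\mathcal{S}\to(0,\infty)$ be a smooth radius function. Let $p\in\mathcal{S}$ be a point that contributes to the variable-radius offset surface $\mathcal{S}^{\mathrm{off}}_{\mathcal{R}}$, with corresponding offset point $p^{\mathrm{off}}_{\mathcal{R}}$ and offset direction $\boldsymbol{n}^{\mathrm{off}}_{\mathcal{R}}(p)$, and let $\boldsymbol{n}_p$ be the unit normal of $\mathcal{S}$ at $p$ pointing to the side of the offset layer under consideration. If $\|\nabla\mathcal{R}(p)\|\le 1$, then $\boldsymbol{n}^{\mathrm{off}}_{\mathcal{R}}(p)$ is obtained by rotating $\boldsymbol{n}_p$ by the angle $\alpha=\arcsin(\|\nabla\mathcal{R}(p)\|)$ about the axis $$\frac{\nabla\mathcal{R}(p)}{\|\nabla\mathcal{R}(p)\|}\times\boldsymbol{n}_p .$$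
   Context: $\nabla\mathcal{R}(p)$ denotes the surface (tangential) gradient of $\mathcal{R}$ at $p$. The variable-radius offset surface $\mathcal{S}^{\mathrm{off}}_{\mathcal{R}}$ is the zero level set of $\phi(x)=\min_{q\in\mathcal{S}}\big(\|x-q\|-\mathcal{R}(q)\big)$, i.e. the envelope of the family of balls centered at $q\in\mathcal{S}$ with radius $\mathcal{R}(q)$; it consists of an inward and an outward layer. A point $p\in\mathcal{S}$ contributes to $\mathcal{S}^{\mathrm{off}}_{\mathcal{R}}$ if there is a point $p^{\mathrm{off}}_{\mathcal{R}}\in\mathcal{S}^{\mathrm{off}}_{\mathcal{R}}$ on the sphere of center $p$ and radius $\mathcal{R}(p)$ (a point where this sphere touches the envelope), and the offset direction is the unit vector $\boldsymbol{n}^{\mathrm{off}}_{\mathcal{R}}(p)=(p^{\mathrm{off}}_{\mathcal{R}}-p)/\|p^{\mathrm{off}}_{\mathcal{R}}-p\|$. Rotation about an axis is by the right-hand rule; when $\nabla\mathcal{R}(p)=0$ the angle $\alpha$ is $0$ and the rotation is the identity. *)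

theory Defs
  imports "HOL-Analysis.Analysis"
begin

definition grad3 :: "(real^3 \<Rightarrow> real) \<Rightarrow> real^3 \<Rightarrow> real^3" where
  "grad3 f x = (\<chi> i. frechet_derivative f (at x) (axis i 1))"

fun Ck3 :: "nat \<Rightarrow> (real^3 \<Rightarrow> real) \<Rightarrow> bool" where
  "Ck3 0 f = continuous_on UNIV f"
| "Ck3 (Suc k) f = (f differentiable_on UNIV \<and>
      (\<forall>i. Ck3 k (\<lambda>x. frechet_derivative f (at x) (axis i 1))))"

definition smooth3 :: "(real^3 \<Rightarrow> real) \<Rightarrow> bool" where
  "smooth3 f = (\<forall>k. Ck3 k f)"

text \<open>A smooth closed (compact, boundaryless, connected) orientable surface in R^3,
  presented as a regular level set of a smooth function F.\<close>
definition closed_surface_by :: "(real^3 \<Rightarrow> real) \<Rightarrow> (real^3) set \<Rightarrow> bool" where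
  "closed_surface_by F S = (smooth3 F \<and> S = {x. F x = 0} \<and> S \<noteq> {} \<and> compact S \<and>
      connected S \<and> (\<forall>x\<in>S. grad3 F x \<noteq> 0))"

definition unit_normal :: "(real^3 \<Rightarrow> real) \<Rightarrow> real^3 \<Rightarrow> real^3" where
  "unit_normal F p = grad3 F p /\<^sub>R norm (grad3 F p)"

text \<open>Surface (tangential) gradient of R at p: projection of the ambient gradient of a
  smooth extension of R onto the tangent plane.\<close>
definition surf_grad :: "(real^3 \<Rightarrow> real) \<Rightarrow> (real^3 \<Rightarrow> real) \<Rightarrow> real^3 \<Rightarrow> real^3" where
  "surf_grad F R p = grad3 R p - (grad3 R p \<bullet> unit_normal F p) *\<^sub>R unit_normal F p"

definition offset_fun :: "(real^3) set \<Rightarrow> (real^3 \<Rightarrow> real) \<Rightarrow> real^3 \<Rightarrow> real" where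
  "offset_fun S R x = (INF q\<in>S. norm (x - q) - R q)"

definition offset_surface :: "(real^3) set \<Rightarrow> (real^3 \<Rightarrow> real) \<Rightarrow> (real^3) set" where
  "offset_surface S R = {x. offset_fun S R x = 0}"

text \<open>Rotation of v by angle a about the unit axis k (right-hand rule, Rodrigues formula).\<close>
definition rotate_about :: "real^3 \<Rightarrow> real \<Rightarrow> real^3 \<Rightarrow> real^3" where
  "rotate_about k a v = cos a *\<^sub>R v + sin a *\<^sub>R (cross3 k v) + ((1 - cos a) * (k \<bullet> v)) *\<^sub>R k"

end

theory Submission
  imports Defs
begin

text \<open>Since the sphere of radius R(p) about p touches the envelope at poff, the point p
  minimises q \<mapsto> |poff - q| - R(q) on S = {F = 0}. By the Lagrange multiplier rule (the
  open mapping theorem applied to q \<mapsto> (F q, |poff - q| - R q)) the gradient -u - \<nabla>R(p)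
  of this function is normal to S, where u is the offset direction; so the tangential part
  of u is -\<nabla>_S R(p). Being a unit vector on the side of n, u has normal component
  sqrt(1 - |\<nabla>_S R(p)|^2) = cos \<alpha>, and Rodrigues' formula for an axis orthogonal to n
  rotates n into cos \<alpha> n - sin \<alpha> \<nabla>_S R(p) / |\<nabla>_S R(p)|, which is u.\<close>

lemma linear_functional_eq_inner:
  fixes L :: "real^'n \<Rightarrow> real"
  assumes "linear L"
  shows "L h = (\<chi> i. L (axis i 1)) \<bullet> h"
proof -
  have "L h = L (\<Sum>i\<in>UNIV. h$i *\<^sub>R axis i 1)"
    using basis_expansion[of h] by (simp add: scalar_mult_eq_scaleR)
  also have "\<dots> = (\<Sum>i\<in>UNIV. h$i * L (axis i 1))"
    using assms by (simp add: linear_sum linear_scale)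
  also have "\<dots> = (\<chi> i. L (axis i 1)) \<bullet> h"
    by (simp add: inner_vec_def mult.commute)
  finally show ?thesis .
qed

lemma smooth3_continuous: "smooth3 f \<Longrightarrow> continuous_on UNIV f"
  by (metis Ck3.simps(1) smooth3_def)

lemma smooth3_has_derivative_grad3:
  assumes "smooth3 f"
  shows "(f has_derivative (\<lambda>h. grad3 f x \<bullet> h)) (at x)"
proof -
  have "f differentiable at x"
    using assms unfolding smooth3_def by (metis Ck3.simps(2) UNIV_I differentiable_on_def)
  then have D: "(f has_derivative frechet_derivative f (at x)) (at x)"
    by (rule frechet_derivative_works[THEN iffD1])
  then have "frechet_derivative f (at x) = (\<lambda>h. grad3 f x \<bullet> h)"
    using linear_functional_eq_inner[OF has_derivative_linear] unfolding grad3_def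
    by (auto simp: fun_eq_iff)
  then show ?thesis using D by simp
qed

lemma has_derivative_norm_diff:
  fixes x y :: "'a::real_inner"
  assumes "x \<noteq> y"
  shows "((\<lambda>z. norm (y - z)) has_derivative (\<lambda>h. - (sgn (y - x) \<bullet> h))) (at x)"
proof -
  have "((\<lambda>z. y - z) has_derivative (\<lambda>h. - h)) (at x)"
    by (auto intro!: derivative_eq_intros)
  moreover have "(norm has_derivative (\<lambda>h. h \<bullet> sgn (y - x))) (at (y - x))"
    using assms by (intro has_derivative_norm) simp
  ultimately show ?thesis
    using has_derivative_compose by (fastforce simp: inner_commute)
qed

lemma interior_image_pair_independent_gradients:
  fixes F g :: "'a::euclidean_space \<Rightarrow> real"
  assumes "open S" "p \<in> S" "continuous_on S F" "continuous_on S g"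
    and F': "(F has_derivative (\<lambda>h. a \<bullet> h)) (at p)"
    and g': "(g has_derivative (\<lambda>h. b \<bullet> h)) (at p)"
    and "a \<noteq> 0" and independent: "b \<noteq> ((a \<bullet> b) / (a \<bullet> a)) *\<^sub>R a"
  shows "(F p, g p) \<in> interior ((\<lambda>x. (F x, g x)) ` S)"
proof -
  define \<mu> where "\<mu> = (a \<bullet> b) / (a \<bullet> a)"
  define b' where "b' = b - \<mu> *\<^sub>R a"
  have "a \<bullet> a \<noteq> 0" "b' \<bullet> b' \<noteq> 0"
    using \<open>a \<noteq> 0\<close> independent by (auto simp: b'_def \<mu>_def)
  have ab': "a \<bullet> b' = 0" "b \<bullet> b' = b' \<bullet> b'"
    using \<open>a \<bullet> a \<noteq> 0\<close> by (auto simp: b'_def \<mu>_def algebra_simps inner_commute)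
  define c where "c = a /\<^sub>R (a \<bullet> a) - (\<mu> / (b' \<bullet> b')) *\<^sub>R b'"
  define d where "d = b' /\<^sub>R (b' \<bullet> b')"
  define G where "G = (\<lambda>z::real \<times> real. fst z *\<^sub>R c + snd z *\<^sub>R d)"
  have "a \<bullet> c = 1" "b \<bullet> c = 0" "a \<bullet> d = 0" "b \<bullet> d = 1"
    using \<open>a \<bullet> a \<noteq> 0\<close> \<open>b' \<bullet> b' \<noteq> 0\<close> ab'
    by (simp_all add: c_def d_def inner_diff_right \<mu>_def inner_commute divide_inverse)
  then have "(\<lambda>h. (a \<bullet> h, b \<bullet> h)) \<circ> G = id"
    by (auto simp: fun_eq_iff G_def inner_add_right)
  moreover have "bounded_linear G"
    unfolding G_def by (intro bounded_linear_intros)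
  moreover have "((\<lambda>x. (F x, g x)) has_derivative (\<lambda>h. (a \<bullet> h, b \<bullet> h))) (at p)"
    using F' g' by (rule has_derivative_Pair)
  ultimately show ?thesis
    using assms(1-4) interior_open
    by (intro sussmann_open_mapping[where T = S]) (auto intro: continuous_on_Pair)
qed

lemma lagrange_multiplier_local_min:
  fixes F g :: "'a::euclidean_space \<Rightarrow> real"
  assumes "open S" "p \<in> S" "continuous_on S F" "continuous_on S g"
    and "(F has_derivative (\<lambda>h. a \<bullet> h)) (at p)"
    and "(g has_derivative (\<lambda>h. b \<bullet> h)) (at p)"
    and "a \<noteq> 0" and min: "\<And>x. x \<in> S \<Longrightarrow> F x = F p \<Longrightarrow> g p \<le> g x"
  shows "b = ((a \<bullet> b) / (a \<bullet> a)) *\<^sub>R a"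
proof (rule ccontr)
  assume "b \<noteq> ((a \<bullet> b) / (a \<bullet> a)) *\<^sub>R a"
  then have "(F p, g p) \<in> interior ((\<lambda>x. (F x, g x)) ` S)"
    using assms by (intro interior_image_pair_independent_gradients)
  then obtain e where "e > 0" and e: "ball (F p, g p) e \<subseteq> (\<lambda>x. (F x, g x)) ` S"
    by (meson mem_interior)
  then have "(F p, g p - e/2) \<in> (\<lambda>x. (F x, g x)) ` S"
    by (intro subsetD[OF e]) (simp add: dist_Pair_Pair dist_real_def)
  then obtain x where "x \<in> S" "F x = F p" "g x = g p - e/2"
    by auto
  then show False
    using min \<open>e > 0\<close> by fastforce
qed

lemma offset_surface_radius_le_dist:
  assumes "compact S" "continuous_on S R" "x \<in> offset_surface S R" "q \<in> S"
  shows "R q \<le> norm (x - q)"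
proof -
  have "continuous_on S (\<lambda>q. norm (x - q) - R q)"
    using assms(2) by (intro continuous_intros)
  then have "bdd_below ((\<lambda>q. norm (x - q) - R q) ` S)"
    using assms(1) by (meson bounded_imp_bdd_below compact_continuous_image compact_imp_bounded)
  then have "offset_fun S R x \<le> norm (x - q) - R q"
    unfolding offset_fun_def using assms(4) by (rule cINF_lower)
  then show ?thesis
    using assms(3) by (simp add: offset_surface_def)
qed

lemma norm_unit_normal: "grad3 F p \<noteq> 0 \<Longrightarrow> norm (unit_normal F p) = 1"
  by (simp add: unit_normal_def)

lemma surf_grad_orthogonal_unit_normal:
  assumes "grad3 F p \<noteq> 0"
  shows "surf_grad F R p \<bullet> unit_normal F p = 0"
proof -
  have "unit_normal F p \<bullet> unit_normal F p = 1"
    using norm_unit_normal[OF assms] by (simp add: norm_eq_1)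
  then show ?thesis
    by (simp add: surf_grad_def algebra_simps)
qed

lemma offset_direction_tangential_part:
  assumes surf: "closed_surface_by F S" and "smooth3 R" and "p \<in> S"
    and "poff \<in> offset_surface S R" and "norm (poff - p) = R p" and "poff \<noteq> p"
  defines "u \<equiv> sgn (poff - p)" and "n \<equiv> unit_normal F p"
  shows "u = (u \<bullet> n) *\<^sub>R n - surf_grad F R p"
proof -
  have "smooth3 F" and S: "S = {x. F x = 0}" "compact S" and "grad3 F p \<noteq> 0"
    using surf \<open>p \<in> S\<close> by (auto simp: closed_surface_by_def)
  define a where "a = grad3 F p"
  define r where "r = grad3 R p"
  define g where "g = (\<lambda>x. norm (poff - x) - R x)"
  have contF: "continuous_on UNIV F" and contR: "continuous_on UNIV R"
    using \<open>smooth3 F\<close> \<open>smooth3 R\<close> by (simp_all add: smooth3_continuous)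
  have "continuous_on UNIV g"
    unfolding g_def using contR by (intro continuous_intros)
  moreover have "g p \<le> g x" if "F x = F p" for x
    using offset_surface_radius_le_dist[of S R poff x] assms(3-5) S that
      continuous_on_subset[OF contR subset_UNIV]
    by (simp add: g_def)
  moreover have "(g has_derivative (\<lambda>h. (- u - r) \<bullet> h)) (at p)"
    unfolding g_def u_def r_def using \<open>poff \<noteq> p\<close>
    by (auto intro!: derivative_eq_intros has_derivative_norm_diff
        smooth3_has_derivative_grad3[OF \<open>smooth3 R\<close>] simp: inner_diff_left)
  ultimately have "- u - r = ((a \<bullet> (- u - r)) / (a \<bullet> a)) *\<^sub>R a"
    using \<open>grad3 F p \<noteq> 0\<close> smooth3_has_derivative_grad3[OF \<open>smooth3 F\<close>]
    by (intro lagrange_multiplier_local_min[OF open_UNIV UNIV_I contF]) (auto simp: a_def)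
  then obtain \<mu> where "u = - r - \<mu> *\<^sub>R a"
    by (metis add_diff_cancel_left' diff_minus_eq_add minus_diff_eq)
  moreover have "a = norm a *\<^sub>R n"
    using \<open>grad3 F p \<noteq> 0\<close> by (simp add: a_def n_def unit_normal_def)
  ultimately have u: "u = - r - (\<mu> * norm a) *\<^sub>R n"
    by (metis scaleR_scaleR)
  have "n \<bullet> n = 1"
    using norm_unit_normal[OF \<open>grad3 F p \<noteq> 0\<close>] by (simp add: n_def norm_eq_1)
  then show ?thesis
    unfolding surf_grad_def r_def[symmetric] n_def[symmetric] u
    by (simp add: algebra_simps inner_commute)
qed

lemma rotate_about_cross_orthogonal:
  fixes g n :: "real^3"
  assumes "n \<bullet> n = 1" "g \<bullet> n = 0"
  shows "rotate_about (cross3 g n) \<alpha> n = cos \<alpha> *\<^sub>R n - sin \<alpha> *\<^sub>R g"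
proof -
  have "cross3 (cross3 g n) n = (g \<bullet> n) *\<^sub>R n - (n \<bullet> n) *\<^sub>R g"
    by (simp add: cross3_simps forall_3)
  then show ?thesis
    using assms by (simp add: rotate_about_def dot_cross_self)
qed

lemma unit_vector_eq_rotate_about_normal:
  fixes n s u :: "real^3"
  assumes "norm n = 1" "s \<bullet> n = 0" "norm s \<le> 1" "norm u = 1"
    and u: "u = (u \<bullet> n) *\<^sub>R n - s" and "u \<bullet> n \<ge> 0"
  shows "u = rotate_about (cross3 (s /\<^sub>R norm s) n) (arcsin (norm s)) n"
proof -
  have "n \<bullet> n = 1"
    using assms(1) by (simp add: norm_eq_1)
  define \<nu> where "\<nu> = u \<bullet> n"
  have u': "u = \<nu> *\<^sub>R n - s"
    using u by (simp add: \<nu>_def)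
  have "u \<bullet> u = \<nu>\<^sup>2 + s \<bullet> s"
    using assms(2) \<open>n \<bullet> n = 1\<close> unfolding u'
    by (simp add: algebra_simps inner_commute power2_eq_square)
  then have unit: "1 = (u \<bullet> n)\<^sup>2 + (norm s)\<^sup>2"
    using assms(4) by (simp add: \<nu>_def norm_eq_1 power2_norm_eq_inner)
  have "cos (arcsin (norm s)) = sqrt (1 - (norm s)\<^sup>2)"
    using assms(3) norm_ge_zero[of s] by (intro cos_arcsin) linarith+
  also have "\<dots> = u \<bullet> n"
    using unit assms(6) by (intro real_sqrt_unique) auto
  finally have cos: "cos (arcsin (norm s)) = u \<bullet> n" .
  have "sin (arcsin (norm s)) = norm s"
    using assms(3) norm_ge_zero[of s] by (intro sin_arcsin) linarith+
  then have "sin (arcsin (norm s)) *\<^sub>R (s /\<^sub>R norm s) = s"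
    by (cases "s = 0") auto
  then show ?thesis
    using cos \<open>n \<bullet> n = 1\<close> assms(2) u by (simp add: rotate_about_cross_orthogonal)
qed

theorem theorem1:
  fixes F R :: "real^3 \<Rightarrow> real" and S :: "(real^3) set" and p poff np :: "real^3"
  assumes surf: "closed_surface_by F S"
    and Rsmooth: "smooth3 R"
    and Rpos: "\<forall>q\<in>S. R q > 0"
    and pS: "p \<in> S"
    and poff: "poff \<in> offset_surface S R"
    and onsphere: "norm (poff - p) = R p"
    and np: "np = unit_normal F p \<or> np = - unit_normal F p"
    and side: "(poff - p) \<bullet> np \<ge> 0"
    and small: "norm (surf_grad F R p) \<le> 1"
  shows "(poff - p) /\<^sub>R norm (poff - p) =
         rotate_about (cross3 (surf_grad F R p /\<^sub>R norm (surf_grad F R p)) np)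
                      (arcsin (norm (surf_grad F R p))) np"
proof -
  have "grad3 F p \<noteq> 0"
    using surf pS by (auto simp: closed_surface_by_def)
  have "poff \<noteq> p"
    using onsphere Rpos pS by auto
  define u where "u = sgn (poff - p)"
  define n where "n = unit_normal F p"
  have "u = (u \<bullet> n) *\<^sub>R n - surf_grad F R p"
    unfolding u_def n_def
    by (rule offset_direction_tangential_part[OF surf Rsmooth pS poff onsphere \<open>poff \<noteq> p\<close>])
  moreover have "(u \<bullet> np) *\<^sub>R np = (u \<bullet> n) *\<^sub>R n"
    using np by (auto simp: n_def)
  ultimately have "u = (u \<bullet> np) *\<^sub>R np - surf_grad F R p"
    by simp
  moreover have "norm np = 1" "surf_grad F R p \<bullet> np = 0"
    using np \<open>grad3 F p \<noteq> 0\<close> norm_unit_normal surf_grad_orthogonal_unit_normal by auto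
  moreover have "norm u = 1" "u \<bullet> np \<ge> 0"
    using \<open>poff \<noteq> p\<close> side by (auto simp: u_def sgn_div_norm norm_sgn)
  ultimately have "u = rotate_about (cross3 (surf_grad F R p /\<^sub>R norm (surf_grad F R p)) np)
                         (arcsin (norm (surf_grad F R p))) np"
    using small by (intro unit_vector_eq_rotate_about_normal) auto
  then show ?thesis
    by (simp add: u_def sgn_div_norm)
qed

end
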